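(* There exist constants $c,C>0$, infinitely many $n$, and for each such $n$ a partial Boolean function $f_n:X_n\rightarrow\{0,1\}$ with $X_n\subseteq\{0,1\}^n$, such that $WUQ(f_n)\le C$ and $WUC(f_n)\ge c\log n$.
   Context: Query model: a classical randomized query algorithm adaptively queries input bits $x_i$ (each query costs one) and outputs a bit; a quantum query algorithm alternates input-independent unitaries with the oracle $O_x:|i,b,z\rangle\mapsto|i,b\oplus x_i,z\rangle$ and measures an output bit. For an algorithm whose minimum over $x\in X$ of the probability of outputting $f(x)$ is $p>1/2$, its bias is $\beta=p-1/2$ and its weakly unbounded cost is (number of queries) $+\log(1/(2\beta))$. $WUQ(f)$ (resp. $WUC(f)$) is the minimum weakly unbounded cost over quantum (resp. classical randomized) algorithms. $\log$ is base 2. *)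

theory Defs
  imports "HOL-Probability.Probability"
begin

text \<open>A partial Boolean function is a pair (X, f) with X a set of inputs of length n and
  f :: bool list => bool (only its values on X matter).\<close>

text \<open>Deterministic adaptive query algorithms = decision trees.  Node i l r queries x_i
  and continues in l if x_i = 0, in r if x_i = 1.\<close>

datatype dtree = Leaf bool | Node nat dtree dtree

fun dt_depth :: "dtree \<Rightarrow> nat" where
  "dt_depth (Leaf b) = 0"
| "dt_depth (Node i l r) = Suc (max (dt_depth l) (dt_depth r))"

fun dt_valid :: "nat \<Rightarrow> dtree \<Rightarrow> bool" where
  "dt_valid n (Leaf b) = True"
| "dt_valid n (Node i l r) = (i < n \<and> dt_valid n l \<and> dt_valid n r)"

fun dt_eval :: "dtree \<Rightarrow> bool list \<Rightarrow> bool" where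
  "dt_eval (Leaf b) x = b"
| "dt_eval (Node i l r) x = (if x ! i then dt_eval r x else dt_eval l x)"

text \<open>A randomized algorithm making (at most) T queries on inputs of length n is a
  probability distribution D over decision trees of depth at most T querying only
  positions < n.\<close>

definition WUC :: "nat \<Rightarrow> bool list set \<Rightarrow> (bool list \<Rightarrow> bool) \<Rightarrow> real" where
  "WUC n X f = Inf {real T + log 2 (1 / (2 * (p - 1/2))) | T (D :: dtree pmf) p.
      (\<forall>t \<in> set_pmf D. dt_depth t \<le> T \<and> dt_valid n t) \<and>
      1/2 < p \<and> p \<le> 1 \<and>
      (\<forall>x \<in> X. measure_pmf.prob D {t. dt_eval t x = f x} \<ge> p)}"

text \<open>Basis states |i,b,z> with i < n (index register), b a bit (answer register),
  z < m (workspace of dimension m).\<close>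

type_synonym qidx = "nat \<times> bool \<times> nat"

definition QI :: "nat \<Rightarrow> nat \<Rightarrow> qidx set" where
  "QI n m = {..<n} \<times> (UNIV :: bool set) \<times> {..<m}"

definition unitary_on :: "qidx set \<Rightarrow> (qidx \<Rightarrow> qidx \<Rightarrow> complex) \<Rightarrow> bool" where
  "unitary_on S U \<longleftrightarrow> (\<forall>j\<in>S. \<forall>k\<in>S.
      (\<Sum>i\<in>S. cnj (U i j) * U i k) = (if j = k then 1 else 0))"

definition apply_mat :: "qidx set \<Rightarrow> (qidx \<Rightarrow> qidx \<Rightarrow> complex) \<Rightarrow> (qidx \<Rightarrow> complex) \<Rightarrow> (qidx \<Rightarrow> complex)" where
  "apply_mat S U \<psi> = (\<lambda>i. \<Sum>j\<in>S. U i j * \<psi> j)"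

definition query_op :: "bool list \<Rightarrow> (qidx \<Rightarrow> complex) \<Rightarrow> (qidx \<Rightarrow> complex)" where
  "query_op x \<psi> = (\<lambda>(i, b, z). \<psi> (i, b \<noteq> x ! i, z))"

definition init_state :: "qidx \<Rightarrow> complex" where
  "init_state = (\<lambda>v. if v = (0, False, 0) then 1 else 0)"

text \<open>The algorithm U_0, O_x, U_1, O_x, ..., O_x, U_T (with Us = [U_1,...,U_T])
  applied to |0,0,0>.\<close>
definition qfinal :: "nat \<Rightarrow> nat \<Rightarrow> (qidx \<Rightarrow> qidx \<Rightarrow> complex) \<Rightarrow> (qidx \<Rightarrow> qidx \<Rightarrow> complex) list
    \<Rightarrow> bool list \<Rightarrow> (qidx \<Rightarrow> complex)" where
  "qfinal n m U0 Us x =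
     foldl (\<lambda>\<psi> U. apply_mat (QI n m) U (query_op x \<psi>)) (apply_mat (QI n m) U0 init_state) Us"

definition qprob :: "nat \<Rightarrow> nat \<Rightarrow> (qidx \<Rightarrow> qidx \<Rightarrow> complex) \<Rightarrow> (qidx \<Rightarrow> qidx \<Rightarrow> complex) list
    \<Rightarrow> bool list \<Rightarrow> bool \<Rightarrow> real" where
  "qprob n m U0 Us x c = (\<Sum>v\<in>QI n m. if fst (snd v) = c then (cmod (qfinal n m U0 Us x v))\<^sup>2 else 0)"

definition WUQ :: "nat \<Rightarrow> bool list set \<Rightarrow> (bool list \<Rightarrow> bool) \<Rightarrow> real" where
  "WUQ n X f = Inf {real (length Us) + log 2 (1 / (2 * (p - 1/2))) | m U0 Us p.
      0 < m \<and> unitary_on (QI n m) U0 \<and> (\<forall>U \<in> set Us. unitary_on (QI n m) U) \<and>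
      1/2 < p \<and> p \<le> 1 \<and>
      (\<forall>x \<in> X. qprob n m U0 Us x (f x) \<ge> p)}"

end

theory Submission
  imports Defs
begin

text \<open>The inputs of size \<open>n = 4\<^sup>m\<close> are the Hadamard codewords
  \<open>x\<^sub>s = (\<langle>i, s\<rangle> mod 2)\<^sub>i\<^sub><\<^sub>n\<close> of the \<open>s < n\<close>, and \<open>f (x\<^sub>s) = g s\<close> for the bent function
  \<open>g s = \<Sum>\<^sub>j s\<^sub>2\<^sub>j s\<^sub>2\<^sub>j\<^sub>+\<^sub>1 mod 2\<close>.  A single Bernstein--Vazirani query recovers \<open>s\<close>
  exactly, after which \<open>g s\<close> is written into the answer register, so \<open>WUQ \<le> 1\<close>.
  Classically, every Walsh coefficient of \<open>(-1)\<^sup>g\<close> has size \<open>2\<^sup>m = \<surd>n\<close>, while the output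
  of a depth-\<open>T\<close> decision tree on Hadamard codewords is a combination of at most \<open>2\<^sup>T\<close>
  characters of \<open>s\<close>; so the tree agrees with \<open>f\<close> on at most \<open>n (1 + 2\<^sup>T\<^sup>-\<^sup>m) / 2\<close> inputs.
  Averaging over the inputs, bias \<open>\<beta>\<close> forces \<open>2 \<beta> \<le> 2\<^sup>T\<^sup>-\<^sup>m\<close>, i.e. a weakly unbounded
  cost of at least \<open>m = (log n) / 2\<close>.\<close>

definition bsign :: "bool \<Rightarrow> real" where
  "bsign b = (if b then -1 else 1)"

lemma bsign_simps [simp]: "bsign False = 1" "bsign True = -1" "\<bar>bsign b\<bar> = 1"
  by (simp_all add: bsign_def)

lemma bsign_xor: "bsign (a \<noteq> b) = bsign a * bsign b"
  by (simp add: bsign_def)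

lemma sum_lessThan_mult_blocks:
  fixes f :: "nat \<Rightarrow> 'a::comm_monoid_add"
  shows "(\<Sum>r<c * N. f r) = (\<Sum>r<N. \<Sum>e<c. f (c * r + e))"
proof -
  have "(\<Sum>e<c. f (c * r + e)) = sum f {r * c..<r * c + c}" for r
    using sum.shift_bounds_nat_ivl[of f 0 "r * c" c]
    by (simp add: atLeast0LessThan add.commute mult.commute)
  then show ?thesis
    using sum.nat_group[where g = f and n = N and k = c] by (simp add: mult.commute)
qed

unbundle bit_operations_syntax

fun bit_dot :: "nat \<Rightarrow> nat \<Rightarrow> nat \<Rightarrow> bool" where
  "bit_dot 0 i j = False"
| "bit_dot (Suc k) i j = (bit_dot k (i div 2) (j div 2) \<noteq> (odd i \<and> odd j))"

lemma bit_dot_commute: "bit_dot k i j = bit_dot k j i"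
  by (induction k arbitrary: i j) auto

lemma bit_dot_0_left [simp]: "bit_dot k 0 j = False"
  by (induction k arbitrary: j) auto

lemma bit_dot_0_right [simp]: "bit_dot k i 0 = False"
  by (subst bit_dot_commute) simp

lemma bit_dot_xor_left: "bit_dot k (v XOR w) s = (bit_dot k v s \<noteq> bit_dot k w s)"
proof (induction k arbitrary: v w s)
  case (Suc k)
  have "(v XOR w) div 2 = v div 2 XOR w div 2" "odd (v XOR w) = (odd v \<noteq> odd w)"
    using xor_nat_rec[of v w] by (simp_all add: even_xor_iff)
  with Suc show ?case by auto
qed simp

lemma sum_bsign_bit_dot:
  "(\<Sum>r<2 ^ k. bsign (bit_dot k r q \<noteq> bit_dot k r q')) =
     (if q mod 2 ^ k = q' mod 2 ^ k then 2 ^ k else 0)"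
proof (induction k arbitrary: q q')
  case (Suc k)
  have block: "(\<Sum>e<2. bsign (bit_dot (Suc k) (2 * r + e) q \<noteq> bit_dot (Suc k) (2 * r + e) q')) =
      bsign (bit_dot k r (q div 2) \<noteq> bit_dot k r (q' div 2)) * (1 + bsign (odd q \<noteq> odd q'))" for r
  proof -
    have "(2 * r + 1) div 2 = r" "odd (2 * r + 1)" by presburger+
    then show ?thesis
      by (cases "bit_dot k r (q div 2)"; cases "bit_dot k r (q' div 2)"; cases "odd q"; cases "odd q'")
         (simp_all add: lessThan_nat_numeral bsign_def)
  qed
  have mod_iff: "q mod 2 ^ Suc k = q' mod 2 ^ Suc k \<longleftrightarrow>
      q div 2 mod 2 ^ k = q' div 2 mod 2 ^ k \<and> odd q = odd q'"
  proof -
    have digits: "2 * a + u = 2 * b + v \<longleftrightarrow> a = b \<and> u = v" if "u < 2" "v < 2" for a b u v :: nat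
      using that by presburger
    have "q mod 2 = q' mod 2 \<longleftrightarrow> odd q = odd q'" by presburger
    then show ?thesis by (simp add: mod_mult2_eq digits)
  qed
  have "(\<Sum>r<2 ^ Suc k. bsign (bit_dot (Suc k) r q \<noteq> bit_dot (Suc k) r q')) =
      (\<Sum>r<2 ^ k. \<Sum>e<2. bsign (bit_dot (Suc k) (2 * r + e) q \<noteq> bit_dot (Suc k) (2 * r + e) q'))"
    by (simp only: power_Suc sum_lessThan_mult_blocks)
  also have "\<dots> = (\<Sum>r<2 ^ k. bsign (bit_dot k r (q div 2) \<noteq> bit_dot k r (q' div 2))) *
      (1 + bsign (odd q \<noteq> odd q'))"
    by (simp only: block sum_distrib_right)
  also have "\<dots> = (if q div 2 mod 2 ^ k = q' div 2 mod 2 ^ k then 2 ^ k else 0) *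
      (1 + bsign (odd q \<noteq> odd q'))"
    by (simp only: Suc.IH)
  also have "\<dots> = (if q mod 2 ^ Suc k = q' mod 2 ^ Suc k then 2 ^ Suc k else 0)"
    unfolding mod_iff by (simp add: bsign_def)
  finally show ?case .
qed simp

lemma bit_dot_2: "bit_dot 2 w s = ((odd (w div 2) \<and> odd (s div 2)) \<noteq> (odd w \<and> odd s))"
  by (simp add: numeral_2_eq_2)

lemma bit_dot_Suc_Suc:
  "bit_dot (Suc (Suc k)) w s = (bit_dot k (w div 4) (s div 4) \<noteq> bit_dot 2 w s)"
proof -
  have "w div 2 div 2 = w div 4" "s div 2 div 2 = s div 4"
    by (simp_all flip: div_mult2_eq)
  then show ?thesis
    by (auto simp add: bit_dot_2)
qed

fun bent :: "nat \<Rightarrow> nat \<Rightarrow> bool" where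
  "bent 0 s = False"
| "bent (Suc m) s = (bent m (s div 4) \<noteq> (odd s \<and> odd (s div 2)))"

definition and2_walsh :: "nat \<Rightarrow> real" where
  "and2_walsh w = (\<Sum>e<4. bsign ((odd e \<and> odd (e div 2)) \<noteq> bit_dot 2 w e))"

lemma abs_and2_walsh: "\<bar>and2_walsh w\<bar> = 2"
  by (cases "odd w"; cases "odd (w div 2)")
     (simp_all add: and2_walsh_def lessThan_nat_numeral bit_dot_2)

lemma sum_bsign_bent_block:
  "(\<Sum>e<4. bsign (bent (Suc m) (4 * r + e) \<noteq> bit_dot (2 * Suc m) w (4 * r + e))) =
     bsign (bent m r \<noteq> bit_dot (2 * m) (w div 4) r) * and2_walsh w"
proof -
  have "bsign (bent (Suc m) (4 * r + e) \<noteq> bit_dot (2 * Suc m) w (4 * r + e)) =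
      bsign (bent m r \<noteq> bit_dot (2 * m) (w div 4) r) *
      bsign ((odd e \<and> odd (e div 2)) \<noteq> bit_dot 2 w e)" if "e < 4" for e
  proof -
    have digits: "(4 * r + e) div 4 = r" "odd (4 * r + e) = odd e"
        "odd ((4 * r + e) div 2) = odd (e div 2)"
      using that by presburger+
    then have "bit_dot 2 w (4 * r + e) = bit_dot 2 w e"
      by (simp only: bit_dot_2)
    then show ?thesis
      by (simp only: mult_Suc_right add_2_eq_Suc bit_dot_Suc_Suc bent.simps digits)
         (simp only: bsign_xor mult_ac)
  qed
  then show ?thesis
    by (simp add: and2_walsh_def sum_distrib_left)
qed

lemma bent_walsh_flat: "\<bar>\<Sum>s<4 ^ m. bsign (bent m s \<noteq> bit_dot (2 * m) w s)\<bar> = 2 ^ m"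
proof (induction m arbitrary: w)
  case (Suc m)
  have "(\<Sum>s<4 ^ Suc m. bsign (bent (Suc m) s \<noteq> bit_dot (2 * Suc m) w s)) =
      (\<Sum>r<4 ^ m. bsign (bent m r \<noteq> bit_dot (2 * m) (w div 4) r)) * and2_walsh w"
    by (simp only: power_Suc sum_lessThan_mult_blocks sum_bsign_bent_block sum_distrib_right)
  then show ?case
    by (simp only: abs_mult abs_and2_walsh Suc.IH) simp
qed simp

definition hadamard_word :: "nat \<Rightarrow> nat \<Rightarrow> bool list" where
  "hadamard_word k s = map (\<lambda>i. bit_dot k i s) [0..<2 ^ k]"

lemma length_hadamard_word [simp]: "length (hadamard_word k s) = 2 ^ k"
  by (simp add: hadamard_word_def)

lemma nth_hadamard_word [simp]: "i < 2 ^ k \<Longrightarrow> hadamard_word k s ! i = bit_dot k i s"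
  by (simp add: hadamard_word_def)

lemma inj_on_hadamard_word: "inj_on (hadamard_word k) {..<2 ^ k}"
proof
  fix s s' assume s: "s \<in> {..<2 ^ k}" and s': "s' \<in> {..<2 ^ k}"
    and eq: "hadamard_word k s = hadamard_word k s'"
  have "bit_dot k r s = bit_dot k r s'" if "r < 2 ^ k" for r
    using arg_cong[OF eq, of "\<lambda>x. x ! r"] that by simp
  then have "(\<Sum>r<2 ^ k. bsign (bit_dot k r s \<noteq> bit_dot k r s')) = 2 ^ k"
    by simp
  then have "s mod 2 ^ k = s' mod 2 ^ k"
    using sum_bsign_bit_dot[of k s s'] by (simp split: if_splits)
  with s s' show "s = s'"
    by simp
qed

text \<open>On Hadamard codewords, querying bit \<open>i\<close> multiplies the character of \<open>w\<close> by that
  of \<open>i\<close>; so a depth-\<open>d\<close> tree spreads its correlation over at most \<open>2 ^ d\<close>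
  characters, each of which correlates with \<open>\<Phi>\<close> by at most \<open>B\<close>.\<close>

lemma dt_correlation_hadamard_le:
  assumes walsh: "\<And>w. \<bar>\<Sum>s<2 ^ k. bsign (\<Phi> s \<noteq> bit_dot k w s)\<bar> \<le> B"
    and "dt_valid (2 ^ k) t"
  shows "\<bar>\<Sum>s<2 ^ k. bsign (\<Phi> s \<noteq> bit_dot k w s) * bsign (dt_eval t (hadamard_word k s))\<bar>
    \<le> 2 ^ dt_depth t * B"
  using \<open>dt_valid (2 ^ k) t\<close>
proof (induction t arbitrary: w)
  case (Leaf b)
  then show ?case
    using walsh[of w] by (simp add: sum_distrib_right[symmetric] abs_mult)
next
  case (Node i l r)
  define P where "P s = bsign (\<Phi> s \<noteq> bit_dot k w s)" for s
  define Q where "Q s = bsign (\<Phi> s \<noteq> bit_dot k (w XOR i) s)" for s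
  define L where "L s = bsign (dt_eval l (hadamard_word k s))" for s
  define R where "R s = bsign (dt_eval r (hadamard_word k s))" for s
  have "i < 2 ^ k" "dt_valid (2 ^ k) l" "dt_valid (2 ^ k) r"
    using Node.prems by auto
  have "Q s = P s * bsign (bit_dot k i s)" for s
    by (simp only: P_def Q_def bit_dot_xor_left bsign_xor mult.assoc)
  with \<open>i < 2 ^ k\<close> have pointwise: "P s * bsign (dt_eval (Node i l r) (hadamard_word k s)) =
      (P s * L s + P s * R s + Q s * L s - Q s * R s) / 2" for s
    by (simp add: L_def R_def bsign_def algebra_simps)
  then have "(\<Sum>s<2 ^ k. P s * bsign (dt_eval (Node i l r) (hadamard_word k s))) =
      ((\<Sum>s<2 ^ k. P s * L s) + (\<Sum>s<2 ^ k. P s * R s) +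
       (\<Sum>s<2 ^ k. Q s * L s) - (\<Sum>s<2 ^ k. Q s * R s)) / 2"
    by (simp only: pointwise sum.distrib sum_subtractf sum_divide_distrib[symmetric])
  moreover have "\<bar>\<Sum>s<2 ^ k. P s * L s\<bar> \<le> 2 ^ dt_depth l * B"
    "\<bar>\<Sum>s<2 ^ k. Q s * L s\<bar> \<le> 2 ^ dt_depth l * B"
    "\<bar>\<Sum>s<2 ^ k. P s * R s\<bar> \<le> 2 ^ dt_depth r * B"
    "\<bar>\<Sum>s<2 ^ k. Q s * R s\<bar> \<le> 2 ^ dt_depth r * B"
    using Node.IH \<open>dt_valid (2 ^ k) l\<close> \<open>dt_valid (2 ^ k) r\<close>
    unfolding P_def Q_def L_def R_def by blast+
  moreover have "2 ^ dt_depth l * B \<le> 2 ^ max (dt_depth l) (dt_depth r) * B"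
    "2 ^ dt_depth r * B \<le> 2 ^ max (dt_depth l) (dt_depth r) * B"
    using walsh[of w] abs_ge_zero[of "\<Sum>s<2 ^ k. bsign (\<Phi> s \<noteq> bit_dot k w s)"]
    by (auto intro!: mult_right_mono power_increasing)
  ultimately have "\<bar>\<Sum>s<2 ^ k. P s * bsign (dt_eval (Node i l r) (hadamard_word k s))\<bar>
      \<le> 2 * (2 ^ max (dt_depth l) (dt_depth r) * B)"
    by (simp add: abs_le_iff)
  then show ?case
    by (simp only: P_def dt_depth.simps power_Suc mult.assoc)
qed

lemma dt_agreement_bent_le:
  assumes "dt_valid (4 ^ m) t"
  shows "real (card {s \<in> {..<4 ^ m}. dt_eval t (hadamard_word (2 * m) s) = bent m s})
    \<le> (4 ^ m + 2 ^ dt_depth t * 2 ^ m) / 2"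
proof -
  define X where "X s = bsign (bent m s \<noteq> bit_dot (2 * m) 0 s) *
    bsign (dt_eval t (hadamard_word (2 * m) s))" for s
  have four: "(4::nat) ^ m = 2 ^ (2 * m)"
    by (simp add: power_mult)
  have "\<bar>\<Sum>s<2 ^ (2 * m). X s\<bar> \<le> 2 ^ dt_depth t * 2 ^ m"
    unfolding X_def using assms bent_walsh_flat[of m] unfolding four
    by (intro dt_correlation_hadamard_le) auto
  have "real (card {s \<in> {..<4 ^ m}. dt_eval t (hadamard_word (2 * m) s) = bent m s}) =
      (\<Sum>s<2 ^ (2 * m). of_bool (dt_eval t (hadamard_word (2 * m) s) = bent m s))"
    by (simp add: four Int_def)
  also have "\<dots> = (\<Sum>s<2 ^ (2 * m). (1 + X s) / 2)"
    by (intro sum.cong refl) (simp add: X_def bsign_def)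
  also have "\<dots> = (2 ^ (2 * m) + (\<Sum>s<2 ^ (2 * m). X s)) / 2"
    by (simp add: sum.distrib sum_divide_distrib[symmetric])
  also have "\<dots> \<le> (4 ^ m + 2 ^ dt_depth t * 2 ^ m) / 2"
    using \<open>\<bar>\<Sum>s<2 ^ (2 * m). X s\<bar> \<le> 2 ^ dt_depth t * 2 ^ m\<close>
    by (simp add: power_mult abs_le_iff)
  finally show ?thesis .
qed

primrec full_tree :: "(bool list \<Rightarrow> bool) \<Rightarrow> nat \<Rightarrow> nat \<Rightarrow> dtree" where
  "full_tree f j 0 = Leaf (f [])"
| "full_tree f j (Suc r) =
    Node j (full_tree (\<lambda>y. f (False # y)) (Suc j) r) (full_tree (\<lambda>y. f (True # y)) (Suc j) r)"

lemma dt_depth_full_tree [simp]: "dt_depth (full_tree f j r) = r"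
  by (induction r arbitrary: f j) auto

lemma dt_valid_full_tree: "j + r \<le> n \<Longrightarrow> dt_valid n (full_tree f j r)"
  by (induction r arbitrary: f j) auto

lemma dt_eval_full_tree: "length x = j + r \<Longrightarrow> dt_eval (full_tree f j r) x = f (drop j x)"
proof (induction r arbitrary: f j)
  case (Suc r)
  then have "drop j x = x ! j # drop (Suc j) x"
    by (simp add: Cons_nth_drop_Suc)
  with Suc show ?case
    by simp
qed simp

lemma log_bias_ge:
  fixes p :: real and T m :: nat
  assumes "1/2 < p" and "2 * (p - 1/2) * 2 ^ m \<le> 2 ^ T"
  shows "real m \<le> real T + log 2 (1 / (2 * (p - 1/2)))"
proof -
  define q where "q = 2 * (p - 1/2)"
  have "0 < q"
    using assms(1) by (simp add: q_def)
  have "q \<le> 2 powr (real T - real m)"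
    using assms(2) by (simp add: q_def powr_diff powr_realpow pos_le_divide_eq)
  then have "log 2 q \<le> real T - real m"
    using \<open>0 < q\<close> by (simp add: log_le_iff)
  then show ?thesis
    unfolding q_def[symmetric] using \<open>0 < q\<close> by (simp add: log_divide)
qed

lemma sum_prob_eq_expectation_card:
  assumes "finite X"
  shows "(\<Sum>x\<in>X. measure_pmf.prob D {t. P t x}) =
    measure_pmf.expectation D (\<lambda>t. real (card {x \<in> X. P t x}))"
proof -
  have "(\<Sum>x\<in>X. measure_pmf.prob D {t. P t x}) =
      measure_pmf.expectation D (\<lambda>t. \<Sum>x\<in>X. indicator {t. P t x} t)"
    by (simp add: Bochner_Integration.integral_sum measure_pmf.integrable_const_bound[where B = 1])
  also have "(\<lambda>t. \<Sum>x\<in>X. indicator {t. P t x} t :: real) = (\<lambda>t. real (card {x \<in> X. P t x}))"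
    using assms by (simp add: indicator_def Int_def)
  finally show ?thesis .
qed

text \<open>Yao's principle in averaging form: if every tree in the support of \<open>D\<close> agrees with
  \<open>f\<close> on few inputs, \<open>D\<close> cannot succeed with high probability on all of them.\<close>

lemma WUC_ge_of_agreement_le:
  fixes m :: nat
  assumes "finite X" "X \<noteq> {}" "X \<subseteq> {x. length x = n}"
    and agree: "\<And>t. dt_valid n t \<Longrightarrow>
      real (card {x \<in> X. dt_eval t x = f x}) \<le> real (card X) / 2 * (1 + 2 ^ dt_depth t / 2 ^ m)"
  shows "real m \<le> WUC n X f"
proof -
  define S where "S = {real T + log 2 (1 / (2 * (p - 1/2))) | T (D :: dtree pmf) p.
      (\<forall>t \<in> set_pmf D. dt_depth t \<le> T \<and> dt_valid n t) \<and> 1/2 < p \<and> p \<le> 1 \<and>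
      (\<forall>x \<in> X. measure_pmf.prob D {t. dt_eval t x = f x} \<ge> p)}"
  have "real n + log 2 (1 / (2 * (1 - 1/2))) \<in> S"
    unfolding S_def using assms(3) dt_valid_full_tree[of 0 n n f]
    by (intro CollectI exI[of _ n] exI[of _ "return_pmf (full_tree f 0 n)"] exI[of _ 1])
       (auto simp: measure_return dt_eval_full_tree)
  moreover have "real m \<le> c" if "c \<in> S" for c
  proof -
    obtain T D p where c: "c = real T + log 2 (1 / (2 * (p - 1/2)))"
      and D: "\<forall>t \<in> set_pmf D. dt_depth t \<le> T \<and> dt_valid n t"
      and p: "1/2 < p" and success: "\<forall>x \<in> X. measure_pmf.prob D {t. dt_eval t x = f x} \<ge> p"
      using \<open>c \<in> S\<close> unfolding S_def by blast
    have "real (card {x \<in> X. dt_eval t x = f x}) \<le> real (card X) / 2 * (1 + 2 ^ T / 2 ^ m)"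
      if "t \<in> set_pmf D" for t
    proof -
      have "(2::real) ^ dt_depth t \<le> 2 ^ T"
        using D that by (intro power_increasing) auto
      then have "real (card X) / 2 * (1 + 2 ^ dt_depth t / 2 ^ m) \<le> real (card X) / 2 * (1 + 2 ^ T / 2 ^ m)"
        by (intro mult_left_mono add_left_mono divide_right_mono) auto
      with agree[of t] D that show ?thesis
        by fastforce
    qed
    then have "measure_pmf.expectation D (\<lambda>t. real (card {x \<in> X. dt_eval t x = f x}))
        \<le> real (card X) / 2 * (1 + 2 ^ T / 2 ^ m)"
      by (intro measure_pmf.integral_le_const)
         (auto simp: AE_measure_pmf_iff intro!: measure_pmf.integrable_const_bound[where B = "card X"] card_mono assms(1))
    moreover have "real (card X) * p \<le> (\<Sum>x\<in>X. measure_pmf.prob D {t. dt_eval t x = f x})"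
      using sum_mono[of X "\<lambda>_. p"] success by simp
    ultimately have "real (card X) * p \<le> real (card X) * ((1 + 2 ^ T / 2 ^ m) / 2)"
      unfolding sum_prob_eq_expectation_card[OF assms(1)] by simp
    then have "p \<le> (1 + 2 ^ T / 2 ^ m) / 2"
      using assms(1,2) by (simp add: card_gt_0_iff)
    then have "2 * (p - 1/2) * 2 ^ m \<le> 2 ^ T"
      by (simp add: field_simps)
    then show "real m \<le> c"
      unfolding c by (rule log_bias_ge[OF p])
  qed
  ultimately show ?thesis
    unfolding WUC_def S_def[symmetric] by (intro cInf_greatest) auto
qed

definition bent_codewords :: "nat \<Rightarrow> bool list set" where
  "bent_codewords m = hadamard_word (2 * m) ` {..<4 ^ m}"

definition bent_of_codeword :: "nat \<Rightarrow> bool list \<Rightarrow> bool" where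
  "bent_of_codeword m x = (\<exists>s<4 ^ m. x = hadamard_word (2 * m) s \<and> bent m s)"

lemma inj_on_hadamard_word_pow4: "inj_on (hadamard_word (2 * m)) {..<4 ^ m}"
  using inj_on_hadamard_word[of "2 * m"] by (simp add: power_mult)

lemma bent_of_codeword_hadamard_word:
  "s < 4 ^ m \<Longrightarrow> bent_of_codeword m (hadamard_word (2 * m) s) = bent m s"
  using inj_on_hadamard_word_pow4[of m] by (auto simp: bent_of_codeword_def inj_on_def)

lemma bent_codewords_length: "bent_codewords m \<subseteq> {x. length x = 4 ^ m}"
  by (auto simp: bent_codewords_def power_mult)

lemma WUC_bent_ge: "real m \<le> WUC (4 ^ m) (bent_codewords m) (bent_of_codeword m)"
proof (rule WUC_ge_of_agreement_le)
  show "finite (bent_codewords m)" "bent_codewords m \<noteq> {}"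
    by (simp_all add: bent_codewords_def lessThan_empty_iff)
  show "bent_codewords m \<subseteq> {x. length x = 4 ^ m}"
    by (rule bent_codewords_length)
  fix t assume "dt_valid (4 ^ m) t"
  have card: "card (bent_codewords m) = 4 ^ m"
    unfolding bent_codewords_def by (simp add: card_image inj_on_hadamard_word_pow4)
  have "{x \<in> bent_codewords m. dt_eval t x = bent_of_codeword m x} =
      hadamard_word (2 * m) ` {s \<in> {..<4 ^ m}. dt_eval t (hadamard_word (2 * m) s) = bent m s}"
    by (auto simp: bent_codewords_def bent_of_codeword_hadamard_word)
  then have "real (card {x \<in> bent_codewords m. dt_eval t x = bent_of_codeword m x}) =
      real (card {s \<in> {..<4 ^ m}. dt_eval t (hadamard_word (2 * m) s) = bent m s})"
    by (metis (no_types, lifting) card_image inj_on_hadamard_word_pow4 inj_on_subset mem_Collect_eq subsetI)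
  also have "\<dots> \<le> (4 ^ m + 2 ^ dt_depth t * 2 ^ m) / 2"
    using \<open>dt_valid (4 ^ m) t\<close> by (rule dt_agreement_bent_le)
  also have "\<dots> = real (card (bent_codewords m)) / 2 * (1 + 2 ^ dt_depth t / 2 ^ m)"
  proof -
    have "(4::real) ^ m = 2 ^ m * 2 ^ m"
      by (simp flip: power_mult_distrib)
    then show ?thesis
      by (simp add: card field_simps)
  qed
  finally show "real (card {x \<in> bent_codewords m. dt_eval t x = bent_of_codeword m x})
      \<le> real (card (bent_codewords m)) / 2 * (1 + 2 ^ dt_depth t / 2 ^ m)" .
qed

lemma sum_QI_1:
  fixes F :: "qidx \<Rightarrow> 'a::comm_monoid_add"
  shows "(\<Sum>v\<in>QI n 1. F v) = (\<Sum>i<n. F (i, False, 0) + F (i, True, 0))"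
proof -
  have "QI n 1 = (\<lambda>i. (i, False, 0)) ` {..<n} \<union> (\<lambda>i. (i, True, 0)) ` {..<n}"
    by (auto simp: QI_def image_iff)
  then have "(\<Sum>v\<in>QI n 1. F v) =
      (\<Sum>v\<in>(\<lambda>i. (i, False, 0)) ` {..<n}. F v) + (\<Sum>v\<in>(\<lambda>i. (i, True, 0)) ` {..<n}. F v)"
    by (simp only:) (rule sum.union_disjoint; auto)
  also have "\<dots> = (\<Sum>i<n. F (i, False, 0)) + (\<Sum>i<n. F (i, True, 0))"
    by (simp add: sum.reindex inj_on_def)
  finally show ?thesis
    by (simp add: sum.distrib)
qed

lemma apply_mat_init_state:
  assumes "0 < n" "0 < m"
  shows "apply_mat (QI n m) U init_state v = U v (0, False, 0)"
proof -
  have "(0, False, 0) \<in> QI n m"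
    using assms by (simp add: QI_def)
  then show ?thesis
    unfolding apply_mat_def init_state_def by (simp add: QI_def if_distrib cong: if_cong)
qed

text \<open>The Hadamard transform on the \<open>k\<close> index qubits tensored with
  \<open>X\<^bsup>\<beta> i\<^esup> H X\<^bsup>\<alpha>\<^esup>\<close> on the answer qubit, \<open>i\<close> being the output index.\<close>

definition hadamard_gate :: "nat \<Rightarrow> bool \<Rightarrow> (nat \<Rightarrow> bool) \<Rightarrow> qidx \<Rightarrow> qidx \<Rightarrow> complex" where
  "hadamard_gate k \<alpha> \<beta> r q = complex_of_real
     (bsign (bit_dot k (fst r) (fst q)) * bsign ((fst (snd q) \<noteq> \<alpha>) \<and> (fst (snd r) \<noteq> \<beta> (fst r)))
      / sqrt (2 * 2 ^ k))"

lemma unitary_hadamard_gate: "unitary_on (QI (2 ^ k) 1) (hadamard_gate k \<alpha> \<beta>)"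
  unfolding unitary_on_def
proof (intro ballI)
  fix q q' assume "q \<in> QI (2 ^ k) 1" "q' \<in> QI (2 ^ k) 1"
  then obtain a b a' b' where q: "q = (a, b, 0)" "a < 2 ^ k" and q': "q' = (a', b', 0)" "a' < 2 ^ k"
    by (auto simp: QI_def)
  define d where "d = sqrt (2 * 2 ^ k :: real)"
  have "d * d = 2 * 2 ^ k"
    by (simp add: d_def)
  have "cnj (hadamard_gate k \<alpha> \<beta> (j, False, 0) q) * hadamard_gate k \<alpha> \<beta> (j, False, 0) q' +
      cnj (hadamard_gate k \<alpha> \<beta> (j, True, 0) q) * hadamard_gate k \<alpha> \<beta> (j, True, 0) q' =
      complex_of_real (bsign (bit_dot k j a \<noteq> bit_dot k j a') * (if b = b' then 2 else 0) / (d * d))"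
    for j
    unfolding hadamard_gate_def q q' d_def[symmetric]
    by (cases b; cases b'; cases \<alpha>; cases "\<beta> j"; cases "bit_dot k j a"; cases "bit_dot k j a'")
       (simp_all add: bsign_def field_simps)
  then have "(\<Sum>i\<in>QI (2 ^ k) 1. cnj (hadamard_gate k \<alpha> \<beta> i q) * hadamard_gate k \<alpha> \<beta> i q') =
      complex_of_real (\<Sum>j<2 ^ k. bsign (bit_dot k j a \<noteq> bit_dot k j a') * (if b = b' then 2 else 0) / (d * d))"
    by (simp only: sum_QI_1 of_real_sum)
  also have "\<dots> = complex_of_real
      ((\<Sum>j<2 ^ k. bsign (bit_dot k j a \<noteq> bit_dot k j a')) * (if b = b' then 2 else 0) / (d * d))"
    by (simp only: sum_distrib_right sum_divide_distrib)
  also have "\<dots> = (if q = q' then 1 else 0)"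
    unfolding sum_bsign_bit_dot \<open>d * d = 2 * 2 ^ k\<close> using q q' by auto
  finally show "(\<Sum>i\<in>QI (2 ^ k) 1. cnj (hadamard_gate k \<alpha> \<beta> i q) * hadamard_gate k \<alpha> \<beta> i q') =
      (if q = q' then 1 else 0)" .
qed

text \<open>Bernstein--Vazirani: the first gate and the query produce
  \<open>\<Sum>\<^sub>i\<^sub>,\<^sub>b (-1)\<^bsup>b + x\<^sub>i\<^esup> |i,b\<rangle>\<close>, which for a Hadamard codeword \<open>x\<close> of \<open>s\<close> the second
  gate maps to \<open>|s, g s\<rangle>\<close>.\<close>

lemma qfinal_hadamard_word:
  assumes "s < 2 ^ k" "j < 2 ^ k"
  shows "qfinal (2 ^ k) 1 (hadamard_gate k True (\<lambda>_. False)) [hadamard_gate k False (\<lambda>i. \<not> g i)]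
      (hadamard_word k s) (j, c, z) = (if c = g j \<and> j = s then 1 else 0)"
proof -
  define d where "d = sqrt (2 * 2 ^ k :: real)"
  have "d * d = 2 * 2 ^ k"
    by (simp add: d_def)
  define \<psi> where "\<psi> = query_op (hadamard_word k s)
    (apply_mat (QI (2 ^ k) 1) (hadamard_gate k True (\<lambda>_. False)) init_state)"
  have \<psi>: "\<psi> (i, b, 0) = complex_of_real (bsign (b \<noteq> bit_dot k i s) / d)" if "i < 2 ^ k" for i b
    using that by (simp add: \<psi>_def query_op_def apply_mat_init_state hadamard_gate_def d_def[symmetric] bsign_def)
  have "hadamard_gate k False (\<lambda>i. \<not> g i) (j, c, z) (i, False, 0) * \<psi> (i, False, 0) +
      hadamard_gate k False (\<lambda>i. \<not> g i) (j, c, z) (i, True, 0) * \<psi> (i, True, 0) =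
      complex_of_real (bsign (bit_dot k i j \<noteq> bit_dot k i s) * (if c = g j then 2 else 0) / (d * d))"
    if "i < 2 ^ k" for i
    unfolding \<psi>[OF that] hadamard_gate_def d_def[symmetric]
    by (cases c; cases "g j"; cases "bit_dot k i j"; cases "bit_dot k i s")
       (simp_all add: bit_dot_commute[of k j i] bsign_def field_simps)
  then have "(\<Sum>i<2 ^ k. hadamard_gate k False (\<lambda>i. \<not> g i) (j, c, z) (i, False, 0) * \<psi> (i, False, 0) +
      hadamard_gate k False (\<lambda>i. \<not> g i) (j, c, z) (i, True, 0) * \<psi> (i, True, 0)) =
      complex_of_real (\<Sum>i<2 ^ k. bsign (bit_dot k i j \<noteq> bit_dot k i s) * (if c = g j then 2 else 0) / (d * d))"
    unfolding of_real_sum by (intro sum.cong) auto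
  moreover have "qfinal (2 ^ k) 1 (hadamard_gate k True (\<lambda>_. False)) [hadamard_gate k False (\<lambda>i. \<not> g i)]
      (hadamard_word k s) (j, c, z) = apply_mat (QI (2 ^ k) 1) (hadamard_gate k False (\<lambda>i. \<not> g i)) \<psi> (j, c, z)"
    by (simp add: qfinal_def \<psi>_def)
  ultimately have "qfinal (2 ^ k) 1 (hadamard_gate k True (\<lambda>_. False)) [hadamard_gate k False (\<lambda>i. \<not> g i)]
      (hadamard_word k s) (j, c, z) =
      complex_of_real (\<Sum>i<2 ^ k. bsign (bit_dot k i j \<noteq> bit_dot k i s) * (if c = g j then 2 else 0) / (d * d))"
    by (simp only: apply_mat_def sum_QI_1)
  also have "\<dots> = complex_of_real
      ((\<Sum>i<2 ^ k. bsign (bit_dot k i j \<noteq> bit_dot k i s)) * (if c = g j then 2 else 0) / (d * d))"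
    by (simp only: sum_distrib_right sum_divide_distrib)
  also have "\<dots> = (if c = g j \<and> j = s then 1 else 0)"
    unfolding sum_bsign_bit_dot \<open>d * d = 2 * 2 ^ k\<close> using assms by auto
  finally show ?thesis .
qed

lemma qprob_hadamard_word:
  assumes "s < 2 ^ k"
  shows "qprob (2 ^ k) 1 (hadamard_gate k True (\<lambda>_. False)) [hadamard_gate k False (\<lambda>i. \<not> g i)]
      (hadamard_word k s) (g s) = 1"
proof -
  have "qprob (2 ^ k) 1 (hadamard_gate k True (\<lambda>_. False)) [hadamard_gate k False (\<lambda>i. \<not> g i)]
      (hadamard_word k s) (g s) = (\<Sum>j<2 ^ k. if j = s then 1 else 0)"
    unfolding qprob_def sum_QI_1
    by (intro sum.cong refl) (use qfinal_hadamard_word[OF assms] in \<open>cases "g s"; auto\<close>)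
  also have "\<dots> = 1"
    using assms by simp
  finally show ?thesis .
qed

lemma WUQ_le_of_exact:
  assumes "0 < m" "unitary_on (QI n m) U0" "\<forall>U \<in> set Us. unitary_on (QI n m) U"
    and "\<forall>x \<in> X. qprob n m U0 Us x (f x) \<ge> 1"
  shows "WUQ n X f \<le> length Us"
proof -
  define S where "S = {real (length Us) + log 2 (1 / (2 * (p - 1/2))) | m U0 Us p.
      0 < m \<and> unitary_on (QI n m) U0 \<and> (\<forall>U \<in> set Us. unitary_on (QI n m) U) \<and>
      1/2 < p \<and> p \<le> 1 \<and> (\<forall>x \<in> X. qprob n m U0 Us x (f x) \<ge> p)}"
  have "real (length Us) + log 2 (1 / (2 * (1 - 1/2))) \<in> S"
    unfolding S_def using assms
    by (intro CollectI exI[of _ m] exI[of _ U0] exI[of _ Us] exI[of _ 1]) auto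
  moreover have "bdd_below S"
    unfolding S_def by (rule bdd_belowI[of _ 0]) auto
  ultimately show ?thesis
    unfolding WUQ_def S_def[symmetric] by (simp add: cInf_lower)
qed

lemma WUQ_bent_le: "WUQ (4 ^ m) (bent_codewords m) (bent_of_codeword m) \<le> 1"
proof -
  have four: "(4::nat) ^ m = 2 ^ (2 * m)"
    by (simp add: power_mult)
  have "\<forall>x \<in> bent_codewords m. qprob (2 ^ (2 * m)) 1 (hadamard_gate (2 * m) True (\<lambda>_. False))
      [hadamard_gate (2 * m) False (\<lambda>i. \<not> bent m i)] x (bent_of_codeword m x) \<ge> 1"
  proof
    fix x assume "x \<in> bent_codewords m"
    then obtain s where "s < 4 ^ m" "x = hadamard_word (2 * m) s"
      by (auto simp: bent_codewords_def)
    then show "qprob (2 ^ (2 * m)) 1 (hadamard_gate (2 * m) True (\<lambda>_. False))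
      [hadamard_gate (2 * m) False (\<lambda>i. \<not> bent m i)] x (bent_of_codeword m x) \<ge> 1"
      using qprob_hadamard_word[of s "2 * m" "bent m"] bent_of_codeword_hadamard_word[of s m]
      by (simp add: four)
  qed
  then have "WUQ (2 ^ (2 * m)) (bent_codewords m) (bent_of_codeword m)
      \<le> length [hadamard_gate (2 * m) False (\<lambda>i. \<not> bent m i)]"
    using unitary_hadamard_gate by (intro WUQ_le_of_exact) simp_all
  then show ?thesis
    by (simp add: four)
qed

theorem lemma8:
  shows "\<exists>c C :: real. c > 0 \<and> C > 0 \<and>
    infinite {n :: nat. \<exists>(X :: bool list set) (f :: bool list \<Rightarrow> bool).
       X \<subseteq> {x. length x = n} \<and> WUQ n X f \<le> C \<and> WUC n X f \<ge> c * log 2 (real n)}"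
proof (intro exI conjI)
  let ?good = "{n :: nat. \<exists>(X :: bool list set) (f :: bool list \<Rightarrow> bool).
       X \<subseteq> {x. length x = n} \<and> WUQ n X f \<le> 1 \<and> WUC n X f \<ge> 1/2 * log 2 (real n)}"
  have "4 ^ m \<in> ?good" for m
  proof -
    have "real (4 ^ m) = (2::real) ^ (2 * m)"
      by (simp add: power_mult)
    then have "1/2 * log 2 (real (4 ^ m)) = real m"
      by simp
    then show ?thesis
      using bent_codewords_length[of m] WUQ_bent_le[of m] WUC_bent_ge[of m]
      by (intro CollectI exI[of _ "bent_codewords m"] exI[of _ "bent_of_codeword m"]) simp
  qed
  moreover have "infinite (range (\<lambda>m::nat. (4::nat) ^ m))"
    by (rule range_inj_infinite) (simp add: inj_on_def)
  ultimately show "infinite ?good"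
    by (metis (no_types, lifting) image_subsetI infinite_super)
qed simp_all

end
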